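(* Let $k_1,k_2$ be nonnegative integers with $k_1+k_2\ge1$, and let $0<x<1$. Then $$ {}_3F_2\!\left(\begin{matrix}1,\frac{k_1+k_2}{2}+1,\frac{k_1+k_2+1}{2}\\ k_1+1,k_2+1\end{matrix};x\right)=\frac{k_1!\,k_2!}{(k_1+k_2)!}\frac{2^{k_1+k_2}}{x^{k_2}}\frac{(1+\sqrt{1-x})^{k_2-k_1}}{\sqrt{1-x}}+\frac{k_2}{(k_1+k_2)\sqrt{1-x}}\left[{}_2F_1\!\left(\begin{matrix}1,k_1+k_2\\ k_1+1\end{matrix};\tfrac12-\tfrac12\sqrt{1-x}\right)-{}_2F_1\!\left(\begin{matrix}1,k_1+k_2\\ k_1+1\end{matrix};\tfrac12+\tfrac12\sqrt{1-x}\right)\right],$$ and $$ {}_3F_2\!\left(\begin{matrix}1,\frac{k_1+k_2}{2}+1,\frac{k_1+k_2+1}{2}\\ k_1+1,k_2+1\end{matrix};x\right)=\frac{1}{(k_1+k_2)\sqrt{1-x}}\left[k_2\,{}_2F_1\!\left(\begin{matrix}1,k_1+k_2\\ k_1+1\end{matrix};\tfrac12-\tfrac12\sqrt{1-x}\right)+k_1\,{}_2F_1\!\left(\begin{matrix}1,k_1+k_2\\ k_2+1\end{matrix};\tfrac12-\tfrac12\sqrt{1-x}\right)\right].$$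
   Context: For $|x|<1$, ${}_2F_1\!\left(\begin{matrix}a,b\\ d\end{matrix};x\right)=\sum_{n\ge0}\frac{(a)_n(b)_n}{(d)_n}\frac{x^n}{n!}$ and ${}_3F_2\!\left(\begin{matrix}a,b,c\\ d,e\end{matrix};x\right)=\sum_{n\ge0}\frac{(a)_n(b)_n(c)_n}{(d)_n(e)_n}\frac{x^n}{n!}$, with $(q)_0=1$, $(q)_n=q(q+1)\cdots(q+n-1)$. *)

theory Defs
  imports "HOL-Analysis.Analysis"
begin

text \<open>Generalized hypergeometric series as the (real) power series sum, as in the paper
  (meant for |x| < 1).\<close>

definition hyp2F1 :: "real \<Rightarrow> real \<Rightarrow> real \<Rightarrow> real \<Rightarrow> real" where
  "hyp2F1 a b d x = (\<Sum>n. pochhammer a n * pochhammer b n / pochhammer d n * x ^ n / fact n)"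

definition hyp3F2 :: "real \<Rightarrow> real \<Rightarrow> real \<Rightarrow> real \<Rightarrow> real \<Rightarrow> real \<Rightarrow> real" where
  "hyp3F2 a b c d e x = (\<Sum>n. pochhammer a n * pochhammer b n * pochhammer c n
      / (pochhammer d n * pochhammer e n) * x ^ n / fact n)"

end

theory Submission
  imports Defs
begin

text \<open>
  Put c = k1! k2! / (k1 + k2)!. Termwise, the 3F2 series is c G(k1, k2; x/4), where
  G(a, b; z) = \<Sum>n C(a + b + 2n, a + n) z^n, and k2 2F1(1, k1 + k2; k1 + 1; w) is
  c (k1 + k2) A(k1, k2; w), where A(a, b; w) = \<Sum>n C(a + n + b - 1, b - 1) w^n.
  Both families satisfy Pascal's rule in (a, b), so identities between them need only be
  checked where a = 0 or b = 0; there they reduce to the binomial series of (1 - 4z)^(-1/2)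
  and (1 - w)^(-b). Writing x = 4u(1 - u) with u = (1 - sqrt(1 - x))/2, this gives
  (1 - 2u) G(a, b; u(1 - u)) = A(a, b; u) + A(b, a; u) and
  A(b, a; u) + A(a, b; 1 - u) = u^(-b) (1 - u)^(-a), from which both formulas follow.
\<close>

section \<open>Binomial series\<close>

lemma pochhammer_of_nat_plus_one:
  "pochhammer (of_nat m + 1 :: 'a::field_char_0) n = fact (m + n) / fact m"
  using pochhammer_product'[of "1::'a" m n] unfolding pochhammer_fact[symmetric]
  by (simp add: add.commute)

lemma negbin_series_sums:
  fixes w :: real
  assumes "\<bar>w\<bar> < 1"
  shows "(\<lambda>n. real ((n + j) choose j) * w ^ n) sums (1 / (1 - w) ^ Suc j)"
proof -
  have "(\<lambda>n. (- real (Suc j) gchoose n) * (- w) ^ n) sums (1 + - w) powr - real (Suc j)"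
    using assms by (intro gen_binomial_real) simp
  moreover have "(- real (Suc j) gchoose n) * (- w) ^ n = real ((n + j) choose j) * w ^ n" for n
  proof -
    have "(- real (Suc j) gchoose n) = (-1) ^ n * (real (n + j) gchoose n)"
      by (simp only: gbinomial_minus) (simp add: algebra_simps)
    also have "real (n + j) gchoose n = real ((n + j) choose n)"
      by (simp only: binomial_gbinomial)
    also have "(n + j) choose n = (n + j) choose j"
      using binomial_symmetric[of j "n + j"] by simp
    finally show ?thesis
      by (simp add: power_minus')
  qed
  moreover have "(1 + - w) powr - real (Suc j) = 1 / (1 - w) ^ Suc j"
  proof -
    have "(1 + - w) powr - real (Suc j) = 1 / (1 - w) powr real (Suc j)"
      by (simp only: powr_minus_divide diff_conv_add_uminus)
    also have "\<dots> = 1 / (1 - w) ^ Suc j"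
      using assms by (subst powr_realpow) auto
    finally show ?thesis .
  qed
  ultimately show ?thesis by simp
qed

lemma gbinomial_minus_half_mult_power: "((-1/2::real) gchoose n) * (-4) ^ n = real ((2 * n) choose n)"
proof -
  have "fact (2 * n) = 4 ^ n * pochhammer (1/2) n * (fact n :: real)"
    by (simp add: fact_double power_mult)
  then have "real ((2 * n) choose n) = 4 ^ n * pochhammer (1/2) n / fact n"
    by (simp add: binomial_fact mult_2)
  then show ?thesis
    by (simp add: gbinomial_pochhammer power_minus')
qed

lemma central_binomial_series_sums:
  fixes z :: real
  assumes "\<bar>z\<bar> < 1/4"
  shows "(\<lambda>n. real ((2 * n) choose n) * z ^ n) sums (1 / sqrt (1 - 4 * z))"
proof -
  have "(\<lambda>n. ((-1/2) gchoose n) * (- 4 * z) ^ n) sums (1 + - 4 * z) powr (-1/2)"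
    using assms by (intro gen_binomial_real) simp
  moreover have "((-1/2) gchoose n) * (- 4 * z) ^ n = real ((2 * n) choose n) * z ^ n" for n
    by (simp only: power_mult_distrib mult.assoc[symmetric] gbinomial_minus_half_mult_power)
  moreover have "(1 + - 4 * z) powr (-1/2) = 1 / sqrt (1 - 4 * z)"
    using assms by (simp add: powr_minus_divide powr_half_sqrt)
  ultimately show ?thesis by simp
qed

section \<open>Two families satisfying Pascal's rule\<close>

definition diag_binomial_series :: "real \<Rightarrow> nat \<Rightarrow> nat \<Rightarrow> real" where
  "diag_binomial_series z a b = (\<Sum>n. real ((a + b + 2 * n) choose (a + n)) * z ^ n)"

text \<open>w^a * negbin_tail w a b is the tail from index a of the power series of (1 - w)^(-b).
  For b = 0 (the series 1) it is 0, which keeps Pascal's rule valid at b = 1.\<close>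

definition negbin_tail :: "real \<Rightarrow> nat \<Rightarrow> nat \<Rightarrow> real" where
  "negbin_tail w a b =
     (case b of 0 \<Rightarrow> 0 | Suc j \<Rightarrow> \<Sum>n. real ((a + n + j) choose j) * w ^ n)"

lemma summable_diag_binomial_series:
  fixes z :: real
  assumes "\<bar>z\<bar> < 1/4"
  shows "summable (\<lambda>n. real ((a + b + 2 * n) choose (a + n)) * z ^ n)"
proof (rule summable_comparison_test')
  show "summable (\<lambda>n. 2 ^ (a + b) * \<bar>4 * z\<bar> ^ n)"
    using assms by (intro summable_mult summable_geometric) simp
  fix n
  have "real ((a + b + 2 * n) choose (a + n)) \<le> 2 ^ (a + b + 2 * n)"
    using binomial_le_pow2[of "a + b + 2 * n" "a + n"] by (simp flip: of_nat_power)
  then have "real ((a + b + 2 * n) choose (a + n)) * \<bar>z\<bar> ^ n \<le> 2 ^ (a + b + 2 * n) * \<bar>z\<bar> ^ n"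
    by (rule mult_right_mono) simp
  moreover have "(2::real) ^ (a + b + 2 * n) = 2 ^ (a + b) * 4 ^ n"
    by (simp add: power_add power_mult)
  ultimately show "norm (real ((a + b + 2 * n) choose (a + n)) * z ^ n) \<le> 2 ^ (a + b) * \<bar>4 * z\<bar> ^ n"
    by (simp add: abs_mult power_abs power_mult_distrib mult_ac)
qed

lemma summable_negbin_tail:
  fixes w :: real
  assumes "\<bar>w\<bar> < 1"
  shows "summable (\<lambda>n. real ((a + n + j) choose j) * w ^ n)"
proof -
  have "summable (\<lambda>n. real ((n + j) choose j) * w ^ n)"
    using negbin_series_sums[OF assms] by (rule sums_summable)
  then show ?thesis
    using summable_powser_ignore_initial_segment[of "\<lambda>m. real ((m + j) choose j)" a w]
    by (simp add: add_ac)
qed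

lemma diag_binomial_series_commute: "diag_binomial_series z a b = diag_binomial_series z b a"
proof -
  have "(a + b + 2 * n) choose (a + n) = (b + a + 2 * n) choose (b + n)" for n
    using binomial_symmetric[of "a + n" "a + b + 2 * n"] by (simp add: add_ac)
  then show ?thesis
    by (simp add: diag_binomial_series_def)
qed

lemma diag_binomial_series_pascal:
  fixes z :: real
  assumes "\<bar>z\<bar> < 1/4"
  shows "diag_binomial_series z (Suc a) (Suc b)
           = diag_binomial_series z a (Suc b) + diag_binomial_series z (Suc a) b"
proof -
  have "real ((Suc a + Suc b + 2 * n) choose (Suc a + n)) * z ^ n
          = real ((a + Suc b + 2 * n) choose (a + n)) * z ^ n
            + real ((Suc a + b + 2 * n) choose (Suc a + n)) * z ^ n" for n
    by (simp add: algebra_simps)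
  then show ?thesis
    unfolding diag_binomial_series_def
    by (simp only: suminf_add[OF summable_diag_binomial_series summable_diag_binomial_series, OF assms assms])
qed

lemma diag_binomial_series_pascal_0:
  fixes z :: real
  assumes "\<bar>z\<bar> < 1/4"
  shows "diag_binomial_series z (Suc a) 0
           = diag_binomial_series z a 0 + z * diag_binomial_series z (Suc (Suc a)) 0"
proof -
  define f where "f n = real ((a + 2 * n) choose Suc (a + n)) * z ^ n" for n
  have "f (Suc n) = z * (real ((Suc (Suc a) + 0 + 2 * n) choose (Suc (Suc a) + n)) * z ^ n)" for n
    by (simp add: f_def algebra_simps del: binomial_Suc_Suc)
  then have "(\<lambda>n. f (Suc n)) sums (z * diag_binomial_series z (Suc (Suc a)) 0)"
    unfolding diag_binomial_series_def
    by (simp only:) (intro sums_mult summable_sums summable_diag_binomial_series assms)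
  moreover have "f 0 = 0"
    by (simp add: f_def)
  ultimately have "f sums (z * diag_binomial_series z (Suc (Suc a)) 0)"
    by (simp add: sums_Suc_iff)
  moreover have "(\<lambda>n. real ((a + 0 + 2 * n) choose (a + n)) * z ^ n)
                   sums diag_binomial_series z a 0"
    unfolding diag_binomial_series_def by (intro summable_sums summable_diag_binomial_series assms)
  ultimately have "(\<lambda>n. real ((Suc a + 0 + 2 * n) choose (Suc a + n)) * z ^ n)
                     sums (diag_binomial_series z a 0 + z * diag_binomial_series z (Suc (Suc a)) 0)"
    by (auto dest: sums_add simp: f_def algebra_simps)
  then show ?thesis
    by (simp add: diag_binomial_series_def sums_iff)
qed

lemma diag_binomial_series_0_0:
  fixes z :: real
  assumes "\<bar>z\<bar> < 1/4"
  shows "diag_binomial_series z 0 0 = 1 / sqrt (1 - 4 * z)"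
  using central_binomial_series_sums[OF assms] by (simp add: diag_binomial_series_def sums_iff)

lemma diag_binomial_series_1_0:
  fixes z :: real
  assumes "\<bar>z\<bar> < 1/4"
  shows "2 * z * diag_binomial_series z 1 0 = diag_binomial_series z 0 0 - 1"
proof -
  define h where "h n = real ((0 + 0 + 2 * n) choose (0 + n)) * z ^ n" for n
  have "h (Suc n) = 2 * z * (real ((1 + 0 + 2 * n) choose (1 + n)) * z ^ n)" for n
  proof -
    have "(2 * Suc n) choose Suc n = (Suc (2 * n) choose n) + (Suc (2 * n) choose Suc n)"
      by simp
    moreover have "Suc (2 * n) choose n = Suc (2 * n) choose Suc n"
      using binomial_symmetric[of n "Suc (2 * n)"] by (simp add: Suc_diff_le)
    ultimately have "real ((2 * Suc n) choose Suc n) = 2 * real ((1 + 2 * n) choose (1 + n))"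
      by simp
    then show ?thesis
      unfolding h_def add_0_left by simp
  qed
  then have "(\<lambda>n. h (Suc n)) sums (2 * z * diag_binomial_series z 1 0)"
    unfolding diag_binomial_series_def
    by (simp only:) (intro sums_mult summable_sums summable_diag_binomial_series assms)
  then have "h sums (2 * z * diag_binomial_series z 1 0 + h 0)"
    by (simp only: sums_Suc_iff)
  moreover have "h 0 = 1" and "diag_binomial_series z 0 0 = suminf h"
    by (simp_all add: h_def[abs_def] diag_binomial_series_def)
  ultimately show ?thesis
    by (simp add: sums_iff)
qed

lemma abs_mult_one_minus_less_quarter:
  fixes u :: real
  assumes "0 < u" "u < 1/2"
  shows "\<bar>u * (1 - u)\<bar> < 1/4"
proof -
  have "0 < (1 - 2 * u)\<^sup>2"
    using assms by simp
  then show ?thesis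
    using assms by (auto simp: power2_eq_square algebra_simps)
qed

lemma diag_binomial_series_left:
  fixes u :: real
  assumes "0 < u" "u < 1/2"
  shows "diag_binomial_series (u * (1 - u)) a 0 = 1 / ((1 - u) ^ a * (1 - 2 * u))"
proof -
  define z where "z = u * (1 - u)"
  define g where "g a = 1 / ((1 - u) ^ a * (1 - 2 * u))" for a
  have z: "\<bar>z\<bar> < 1/4" "z \<noteq> 0"
    using abs_mult_one_minus_less_quarter[OF assms] assms by (simp_all add: z_def)
  have "1 - 4 * z = (1 - 2 * u)\<^sup>2"
    by (simp add: z_def power2_eq_square algebra_simps)
  then have G0: "diag_binomial_series z 0 0 = g 0"
    using assms by (simp add: diag_binomial_series_0_0[OF z(1)] g_def)
  have nz: "1 - u \<noteq> 0" "1 - 2 * u \<noteq> 0"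
    using assms by auto
  have "2 * z * g 1 = g 0 - 1"
    using nz by (simp add: z_def g_def divide_simps)
  then have "2 * z * diag_binomial_series z 1 0 = 2 * z * g 1"
    using diag_binomial_series_1_0[OF z(1)] G0 by simp
  then have G1: "diag_binomial_series z 1 0 = g 1"
    using z(2) by simp
  have g_rec: "g (Suc a) = g a + z * g (Suc (Suc a))" for a
    using nz by (simp add: z_def g_def divide_simps)
  have "diag_binomial_series z a 0 = g a"
  proof (induction a rule: less_induct)
    case (less a)
    consider "a = 0" | "a = 1" | b where "a = Suc (Suc b)"
      by (metis One_nat_def not0_implies_Suc)
    then show ?case
    proof cases
      case 3
      have "z * diag_binomial_series z a 0 = z * g a"
        using diag_binomial_series_pascal_0[OF z(1), of b] g_rec[of b] less[of b] less[of "Suc b"] 3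
        by auto
      then show ?thesis
        using z(2) by simp
    qed (use G0 G1 in simp_all)
  qed
  then show ?thesis
    by (simp add: z_def g_def)
qed

lemma negbin_tail_zero_left:
  fixes w :: real
  assumes "\<bar>w\<bar> < 1"
  shows "negbin_tail w 0 (Suc j) = 1 / (1 - w) ^ Suc j"
  using negbin_series_sums[OF assms, of j] by (simp add: negbin_tail_def sums_iff)

lemma negbin_tail_zero_right: "negbin_tail w a 0 = 0"
  by (simp add: negbin_tail_def)

lemma negbin_tail_pascal:
  fixes w :: real
  assumes "\<bar>w\<bar> < 1"
  shows "negbin_tail w (Suc a) (Suc b) = negbin_tail w a (Suc b) + negbin_tail w (Suc a) b"
proof (cases b)
  case 0
  then show ?thesis
    by (simp add: negbin_tail_def)
next
  case (Suc j)
  have "real ((Suc a + n + b) choose b) * w ^ n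
          = real ((a + n + b) choose b) * w ^ n + real ((Suc a + n + j) choose j) * w ^ n" for n
    by (simp add: Suc algebra_simps)
  then show ?thesis
    unfolding negbin_tail_def Suc nat.case
    by (simp only: suminf_add[OF summable_negbin_tail summable_negbin_tail, OF assms assms])
qed

lemma pascal_recurrence_unique:
  fixes f g :: "nat \<Rightarrow> nat \<Rightarrow> 'a::plus"
  assumes f_rec: "\<And>a b. f (Suc a) (Suc b) = f a (Suc b) + f (Suc a) b"
    and g_rec: "\<And>a b. g (Suc a) (Suc b) = g a (Suc b) + g (Suc a) b"
    and left: "\<And>b. f 0 (Suc b) = g 0 (Suc b)"
    and right: "\<And>a. f (Suc a) 0 = g (Suc a) 0"
    and "a + b \<ge> 1"
  shows "f a b = g a b"
  using \<open>a + b \<ge> 1\<close>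
proof (induction a arbitrary: b)
  case 0
  then show ?case
    using left by (cases b) auto
next
  case (Suc a)
  note outer_IH = Suc.IH
  show ?case
  proof (induction b)
    case (Suc b)
    then show ?case
      using outer_IH[of "Suc b"] by (simp add: f_rec g_rec)
  qed (rule right)
qed

lemma diag_binomial_series_eq_negbin_tails:
  fixes u :: real
  assumes "0 < u" "u < 1/2" "a + b \<ge> 1"
  shows "(1 - 2 * u) * diag_binomial_series (u * (1 - u)) a b = negbin_tail u a b + negbin_tail u b a"
proof (rule pascal_recurrence_unique[where f = "\<lambda>a b. (1 - 2 * u) * diag_binomial_series (u * (1 - u)) a b"])
  have z: "\<bar>u * (1 - u)\<bar> < 1/4"
    using assms by (intro abs_mult_one_minus_less_quarter)
  have w: "\<bar>u\<bar> < 1"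
    using assms by simp
  show "(1 - 2 * u) * diag_binomial_series (u * (1 - u)) (Suc a) (Suc b)
          = (1 - 2 * u) * diag_binomial_series (u * (1 - u)) a (Suc b)
            + (1 - 2 * u) * diag_binomial_series (u * (1 - u)) (Suc a) b" for a b
    by (simp only: diag_binomial_series_pascal[OF z] distrib_left)
  show "negbin_tail u (Suc a) (Suc b) + negbin_tail u (Suc b) (Suc a)
          = (negbin_tail u a (Suc b) + negbin_tail u (Suc b) a)
            + (negbin_tail u (Suc a) b + negbin_tail u b (Suc a))" for a b
    by (simp add: negbin_tail_pascal[OF w] algebra_simps)
  show "(1 - 2 * u) * diag_binomial_series (u * (1 - u)) 0 (Suc b)
          = negbin_tail u 0 (Suc b) + negbin_tail u (Suc b) 0" for b
    using assms
    by (simp add: diag_binomial_series_commute[of _ 0] diag_binomial_series_left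
        negbin_tail_zero_left[OF w] negbin_tail_zero_right)
  show "(1 - 2 * u) * diag_binomial_series (u * (1 - u)) (Suc a) 0
          = negbin_tail u (Suc a) 0 + negbin_tail u 0 (Suc a)" for a
    using assms
    by (simp add: diag_binomial_series_left negbin_tail_zero_left[OF w] negbin_tail_zero_right)
qed (use assms in simp)

lemma negbin_tail_reflect:
  fixes u :: real
  assumes "0 < u" "u < 1" "a + b \<ge> 1"
  shows "negbin_tail u b a + negbin_tail (1 - u) a b = 1 / (u ^ b * (1 - u) ^ a)"
proof (rule pascal_recurrence_unique[where f = "\<lambda>a b. negbin_tail u b a + negbin_tail (1 - u) a b"])
  have w: "\<bar>u\<bar> < 1" "\<bar>1 - u\<bar> < 1"
    using assms by simp_all
  show "negbin_tail u (Suc b) (Suc a) + negbin_tail (1 - u) (Suc a) (Suc b)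
          = (negbin_tail u (Suc b) a + negbin_tail (1 - u) a (Suc b))
            + (negbin_tail u b (Suc a) + negbin_tail (1 - u) (Suc a) b)" for a b
    by (simp add: negbin_tail_pascal[OF w(1)] negbin_tail_pascal[OF w(2)] algebra_simps)
  have "u \<noteq> 0" "1 - u \<noteq> 0"
    using assms by simp_all
  then show "1 / (u ^ Suc b * (1 - u) ^ Suc a)
               = 1 / (u ^ Suc b * (1 - u) ^ a) + 1 / (u ^ b * (1 - u) ^ Suc a)" for a b
    by (simp add: divide_simps)
  show "negbin_tail u (Suc b) 0 + negbin_tail (1 - u) 0 (Suc b) = 1 / (u ^ Suc b * (1 - u) ^ 0)" for b
    using w by (simp add: negbin_tail_zero_left negbin_tail_zero_right)
  show "negbin_tail u 0 (Suc a) + negbin_tail (1 - u) (Suc a) 0 = 1 / (u ^ 0 * (1 - u) ^ Suc a)" for a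
    using w by (simp add: negbin_tail_zero_left negbin_tail_zero_right)
qed (use assms in simp)

section \<open>The hypergeometric series as Pascal families\<close>

lemma pochhammer_half_product:
  "pochhammer (real m / 2 + 1) n * pochhammer ((real m + 1) / 2) n = fact (m + 2 * n) / (fact m * 4 ^ n)"
proof -
  have "(real m + 1) / 2 + 1 / 2 = real m / 2 + 1" "2 * ((real m + 1) / 2) = real m + 1"
    by (simp_all add: field_simps)
  then have "pochhammer (real m + 1) (2 * n)
               = 4 ^ n * pochhammer ((real m + 1) / 2) n * pochhammer (real m / 2 + 1) n"
    using pochhammer_double[of "(real m + 1) / 2" n] by (simp only: power_mult) simp
  then have "fact (m + 2 * n) / fact m
               = 4 ^ n * (pochhammer (real m / 2 + 1) n * pochhammer ((real m + 1) / 2) n)"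
    by (simp only: pochhammer_of_nat_plus_one mult_ac)
  then show ?thesis
    by (simp add: field_simps)
qed

lemma hyp3F2_coeff:
  fixes k1 k2 n :: nat and x :: real
  defines "K \<equiv> k1 + k2"
  shows "pochhammer 1 n * pochhammer (real K / 2 + 1) n * pochhammer ((real K + 1) / 2) n
           / (pochhammer (real k1 + 1) n * pochhammer (real k2 + 1) n) * x ^ n / fact n
         = fact k1 * fact k2 / fact K * (real ((K + 2 * n) choose (k1 + n)) * (x / 4) ^ n)"
proof -
  have "real ((K + 2 * n) choose (k1 + n)) = fact (K + 2 * n) / (fact (k1 + n) * fact (k2 + n))"
    by (subst binomial_fact) (auto simp: K_def intro: arg_cong[where f = fact])
  then show ?thesis
    by (simp only: mult.assoc pochhammer_half_product pochhammer_of_nat_plus_one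
        pochhammer_fact[symmetric]) (simp add: power_divide field_simps)
qed

lemma hyp3F2_eq_diag_binomial_series:
  fixes x :: real
  assumes "\<bar>x\<bar> < 1"
  shows "hyp3F2 1 (real (k1 + k2) / 2 + 1) ((real (k1 + k2) + 1) / 2) (real k1 + 1) (real k2 + 1) x
           = fact k1 * fact k2 / fact (k1 + k2) * diag_binomial_series (x / 4) k1 k2"
  unfolding hyp3F2_def diag_binomial_series_def hyp3F2_coeff
  using assms by (intro suminf_mult summable_diag_binomial_series) simp

lemma hyp2F1_coeff:
  "pochhammer 1 n * pochhammer (real (k1 + Suc j)) n / pochhammer (real k1 + 1) n * w ^ n / fact n
     = fact k1 * fact j / fact (k1 + j) * (real ((k1 + n + j) choose j) * w ^ n)"
proof -
  have "real (k1 + Suc j) = real (k1 + j) + 1"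
    by simp
  moreover have "real ((k1 + n + j) choose j) = fact (k1 + n + j) / (fact j * fact (k1 + n))"
    by (subst binomial_fact) (auto intro: arg_cong[where f = fact])
  ultimately show ?thesis
    by (simp only: pochhammer_of_nat_plus_one pochhammer_fact[symmetric])
      (simp add: field_simps add_ac)
qed

lemma hyp2F1_eq_negbin_tail:
  fixes w :: real
  assumes "\<bar>w\<bar> < 1"
  shows "real k2 * hyp2F1 1 (real (k1 + k2)) (real k1 + 1) w
           = fact k1 * fact k2 / fact (k1 + k2) * real (k1 + k2) * negbin_tail w k1 k2"
proof (cases k2)
  case (Suc j)
  have "hyp2F1 1 (real (k1 + k2)) (real k1 + 1) w = fact k1 * fact j / fact (k1 + j) * negbin_tail w k1 k2"
    unfolding hyp2F1_def negbin_tail_def Suc nat.case hyp2F1_coeff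
    using assms by (intro suminf_mult summable_negbin_tail)
  moreover have "real (Suc j) * (fact k1 * fact j / fact (k1 + j))
                   = fact k1 * fact (Suc j) / fact (k1 + Suc j) * real (k1 + Suc j)"
    by (simp add: field_simps del: of_nat_Suc)
  ultimately show ?thesis
    using Suc by simp
qed (simp add: negbin_tail_zero_right)

lemma hyp3F2_eq_negbin_tails:
  fixes u :: real
  assumes "0 < u" "u < 1/2" "k1 + k2 \<ge> 1"
  shows "hyp3F2 1 (real (k1 + k2) / 2 + 1) ((real (k1 + k2) + 1) / 2) (real k1 + 1) (real k2 + 1)
           (4 * u * (1 - u))
         = fact k1 * fact k2 / fact (k1 + k2) * (negbin_tail u k1 k2 + negbin_tail u k2 k1) / (1 - 2 * u)"
proof -
  have bound: "\<bar>4 * u * (1 - u)\<bar> < 1"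
    using abs_mult_one_minus_less_quarter[of u] assms by (simp add: abs_mult)
  have "1 - 2 * u \<noteq> 0"
    using assms by simp
  then have diag: "diag_binomial_series (u * (1 - u)) k1 k2
                     = (negbin_tail u k1 k2 + negbin_tail u k2 k1) / (1 - 2 * u)"
    by (metis diag_binomial_series_eq_negbin_tails[OF assms] nonzero_mult_div_cancel_left)
  show ?thesis
    using hyp3F2_eq_diag_binomial_series[OF bound, of k1 k2] by (simp add: diag)
qed

lemma power_two_div_powi_eq:
  fixes u q :: real
  assumes "0 < u" "0 < q"
  shows "2 ^ (k1 + k2) / (4 * u * q) ^ k2 * (2 * q) powi (int k2 - int k1) = 1 / (u ^ k2 * q ^ k1)"
proof -
  have "(2 * q) powi (int k2 - int k1) = 2 ^ k2 * q ^ k2 / (2 ^ k1 * q ^ k1)"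
    using assms by (simp add: power_int_diff power_mult_distrib)
  moreover have "(4 * u * q) ^ k2 = 2 ^ k2 * 2 ^ k2 * u ^ k2 * q ^ k2"
    by (simp add: power_mult_distrib flip: power_mult_distrib[of 2 2])
  ultimately show ?thesis
    using assms by (simp add: power_add field_simps)
qed

lemma hyp3F2_eq_hyp2F1_sum:
  fixes u :: real
  assumes "0 < u" "u < 1/2" "k1 + k2 \<ge> 1"
  shows "hyp3F2 1 (real (k1 + k2) / 2 + 1) ((real (k1 + k2) + 1) / 2) (real k1 + 1) (real k2 + 1)
           (4 * u * (1 - u))
         = 1 / (real (k1 + k2) * (1 - 2 * u))
             * (real k2 * hyp2F1 1 (real (k1 + k2)) (real k1 + 1) u
                + real k1 * hyp2F1 1 (real (k1 + k2)) (real k2 + 1) u)"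
proof -
  have "\<bar>u\<bar> < 1"
    using assms by simp
  note F = hyp2F1_eq_negbin_tail[OF this, of k2 k1]
    hyp2F1_eq_negbin_tail[OF this, of k1 k2, unfolded add.commute[of k2] mult.commute[of "fact k2 :: real"]]
  have sum: "real k2 * hyp2F1 1 (real (k1 + k2)) (real k1 + 1) u
               + real k1 * hyp2F1 1 (real (k1 + k2)) (real k2 + 1) u
             = fact k1 * fact k2 / fact (k1 + k2) * real (k1 + k2)
                 * (negbin_tail u k1 k2 + negbin_tail u k2 k1)"
    by (simp only: F distrib_left)
  have "real (k1 + k2) \<noteq> 0"
    using assms by simp
  then show ?thesis
    unfolding hyp3F2_eq_negbin_tails[OF assms] sum by (simp add: ac_simps)
qed

lemma hyp3F2_eq_hyp2F1_diff:
  fixes u :: real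
  assumes "0 < u" "u < 1/2" "k1 + k2 \<ge> 1"
  shows "hyp3F2 1 (real (k1 + k2) / 2 + 1) ((real (k1 + k2) + 1) / 2) (real k1 + 1) (real k2 + 1)
           (4 * u * (1 - u))
         = fact k1 * fact k2 / fact (k1 + k2) * (2 ^ (k1 + k2) / (4 * u * (1 - u)) ^ k2)
             * ((2 * (1 - u)) powi (int k2 - int k1) / (1 - 2 * u))
           + real k2 / (real (k1 + k2) * (1 - 2 * u))
             * (hyp2F1 1 (real (k1 + k2)) (real k1 + 1) u
                - hyp2F1 1 (real (k1 + k2)) (real k1 + 1) (1 - u))"
proof -
  have w: "\<bar>u\<bar> < 1" "\<bar>1 - u\<bar> < 1"
    using assms by simp_all
  have "real k2 * (hyp2F1 1 (real (k1 + k2)) (real k1 + 1) u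
                   - hyp2F1 1 (real (k1 + k2)) (real k1 + 1) (1 - u))
        = fact k1 * fact k2 / fact (k1 + k2) * real (k1 + k2)
            * (negbin_tail u k1 k2 - negbin_tail (1 - u) k1 k2)"
    by (simp only: right_diff_distrib hyp2F1_eq_negbin_tail[OF w(1)] hyp2F1_eq_negbin_tail[OF w(2)])
  moreover have "real (k1 + k2) \<noteq> 0"
    using assms by simp
  ultimately have diff: "real k2 / (real (k1 + k2) * (1 - 2 * u))
                           * (hyp2F1 1 (real (k1 + k2)) (real k1 + 1) u
                              - hyp2F1 1 (real (k1 + k2)) (real k1 + 1) (1 - u))
                         = fact k1 * fact k2 / fact (k1 + k2)
                             * (negbin_tail u k1 k2 - negbin_tail (1 - u) k1 k2) / (1 - 2 * u)"
    by (metis (no_types, lifting) nonzero_mult_div_cancel_left times_divide_eq_left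
        times_divide_eq_right mult.commute divide_divide_eq_left)
  have P: "2 ^ (k1 + k2) / (4 * u * (1 - u)) ^ k2 * (2 * (1 - u)) powi (int k2 - int k1)
             = negbin_tail u k2 k1 + negbin_tail (1 - u) k1 k2"
    by (subst power_two_div_powi_eq) (use assms in \<open>simp_all add: negbin_tail_reflect\<close>)
  have regroup: "fact k1 * fact k2 / fact (k1 + k2) * (2 ^ (k1 + k2) / (4 * u * (1 - u)) ^ k2)
                   * ((2 * (1 - u)) powi (int k2 - int k1) / (1 - 2 * u))
                 = fact k1 * fact k2 / fact (k1 + k2)
                   * (2 ^ (k1 + k2) / (4 * u * (1 - u)) ^ k2 * (2 * (1 - u)) powi (int k2 - int k1))
                   / (1 - 2 * u)"
    by simp
  show ?thesis
    unfolding hyp3F2_eq_negbin_tails[OF assms] diff regroup P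
    by (simp only: add_divide_distrib[symmetric] distrib_left[symmetric]) simp
qed

theorem theorem2:
  fixes k1 k2 :: nat and x :: real
  assumes "k1 + k2 \<ge> 1" and "0 < x" and "x < 1"
  shows "hyp3F2 1 (real (k1 + k2) / 2 + 1) ((real (k1 + k2) + 1) / 2) (real k1 + 1) (real k2 + 1) x
          = fact k1 * fact k2 / fact (k1 + k2) * (2 ^ (k1 + k2) / x ^ k2)
              * ((1 + sqrt (1 - x)) powi (int k2 - int k1) / sqrt (1 - x))
            + real k2 / (real (k1 + k2) * sqrt (1 - x))
              * (hyp2F1 1 (real (k1 + k2)) (real k1 + 1) (1/2 - 1/2 * sqrt (1 - x))
                 - hyp2F1 1 (real (k1 + k2)) (real k1 + 1) (1/2 + 1/2 * sqrt (1 - x)))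
       \<and> hyp3F2 1 (real (k1 + k2) / 2 + 1) ((real (k1 + k2) + 1) / 2) (real k1 + 1) (real k2 + 1) x
          = 1 / (real (k1 + k2) * sqrt (1 - x))
              * (real k2 * hyp2F1 1 (real (k1 + k2)) (real k1 + 1) (1/2 - 1/2 * sqrt (1 - x))
                 + real k1 * hyp2F1 1 (real (k1 + k2)) (real k2 + 1) (1/2 - 1/2 * sqrt (1 - x)))"
proof -
  define u where "u = 1/2 - 1/2 * sqrt (1 - x)"
  have u: "0 < u" "u < 1/2"
    using assms by (auto simp: u_def real_sqrt_lt_1_iff)
  have sqrt_eq: "1/2 + 1/2 * sqrt (1 - x) = 1 - u" "1 + sqrt (1 - x) = 2 * (1 - u)"
      "sqrt (1 - x) = 1 - 2 * u"
    by (simp_all add: u_def)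
  have "4 * u * (1 - u) = 1 - sqrt (1 - x) * sqrt (1 - x)"
    by (simp add: u_def algebra_simps)
  then have x_eq: "x = 4 * u * (1 - u)"
    using assms by simp
  \<comment> \<open>Staged, so that sqrt (1 - x) and x are replaced only after the terms containing them.\<close>
  show ?thesis
    unfolding u_def[symmetric] sqrt_eq(1,2) unfolding sqrt_eq(3) unfolding x_eq
    using hyp3F2_eq_hyp2F1_diff[OF u assms(1)] hyp3F2_eq_hyp2F1_sum[OF u assms(1)] ..
qed

end
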